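(* Let $G$ be a finite group and let $H$ be a non-trivial cyclic $2$-subgroup of $G$. Then $H$ is a perfect code of $G$ if and only if $H$ is not contained in any subgroup $K$ of $G$ such that $|K|/|H|=2$ and $K$ is either cyclic or generalized quaternion.
   Context: For a group $G$ with identity $e$ and an inverse-closed subset $S\subseteq G\setminus\{e\}$, the Cayley graph $\mathrm{Cay}(G,S)$ has vertex set $G$ and edges $\{g,sg\}$ for $s\in S$, $g\in G$. A perfect code in a graph is an independent set $C$ of vertices such that every vertex outside $C$ is adjacent to exactly one vertex of $C$. A subgroup $H$ of $G$ is a perfect code of $G$ if some Cayley graph of $G$ admits $H$ as a perfect code. *)

theory Defs
  imports "HOL-Algebra.Algebra"
begin

definition cayley_adj :: "('a, 'b) monoid_scheme \<Rightarrow> 'a set \<Rightarrow> 'a \<Rightarrow> 'a \<Rightarrow> bool" where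
  "cayley_adj G S g h \<longleftrightarrow> (\<exists>s\<in>S. h = s \<otimes>\<^bsub>G\<^esub> g)"

definition cayley_connection_set :: "('a, 'b) monoid_scheme \<Rightarrow> 'a set \<Rightarrow> bool" where
  "cayley_connection_set G S \<longleftrightarrow>
     S \<subseteq> carrier G - {\<one>\<^bsub>G\<^esub>} \<and> (\<forall>s\<in>S. inv\<^bsub>G\<^esub> s \<in> S)"

definition cayley_perfect_code :: "('a, 'b) monoid_scheme \<Rightarrow> 'a set \<Rightarrow> 'a set \<Rightarrow> bool" where
  "cayley_perfect_code G S C \<longleftrightarrow>
     C \<subseteq> carrier G \<and>
     (\<forall>c1\<in>C. \<forall>c2\<in>C. c1 \<noteq> c2 \<longrightarrow> \<not> cayley_adj G S c1 c2) \<and>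
     (\<forall>v\<in>carrier G - C. \<exists>!c. c \<in> C \<and> cayley_adj G S v c)"

definition subgroup_perfect_code :: "('a, 'b) monoid_scheme \<Rightarrow> 'a set \<Rightarrow> bool" where
  "subgroup_perfect_code G H \<longleftrightarrow>
     (\<exists>S. cayley_connection_set G S \<and> cayley_perfect_code G S H)"

text \<open>Generalized quaternion group Q_{2^n} (n \<ge> 3):
  order 2^n, generated by x, y with x^(2^(n-1)) = 1, y^2 = x^(2^(n-2)), y^-1 x y = x^-1.
  (A group of order 2^n satisfying these relations is isomorphic to Q_{2^n}.)\<close>
definition gen_quaternion_group :: "('a, 'b) monoid_scheme \<Rightarrow> bool" where
  "gen_quaternion_group Q \<longleftrightarrow> group Q \<and>
     (\<exists>n::nat. n \<ge> 3 \<and> finite (carrier Q) \<and> card (carrier Q) = 2 ^ n \<and>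
       (\<exists>x\<in>carrier Q. \<exists>y\<in>carrier Q.
          generate Q {x, y} = carrier Q \<and>
          x [^]\<^bsub>Q\<^esub> ((2::nat) ^ (n - 1)) = \<one>\<^bsub>Q\<^esub> \<and>
          y [^]\<^bsub>Q\<^esub> (2::nat) = x [^]\<^bsub>Q\<^esub> ((2::nat) ^ (n - 2)) \<and>
          inv\<^bsub>Q\<^esub> y \<otimes>\<^bsub>Q\<^esub> x \<otimes>\<^bsub>Q\<^esub> y = inv\<^bsub>Q\<^esub> x))"

end

theory Submission
  imports Defs
begin

text \<open>
  A subgroup \<open>H\<close> is a perfect code of \<open>G\<close> iff it has a right transversal \<open>T\<close> closed under
  inversion (take the connection set \<open>T - H\<close>). Such a \<open>T\<close> can be assembled separately on each of the
  sets \<open>H g H \<union> H g\<inverse> H\<close>, which partition \<open>G\<close>: the right cosets in \<open>H g H\<close> can be paired with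
  those in \<open>H g\<inverse> H\<close> through mutually inverse representatives, unless \<open>H g H = H g\<inverse> H\<close> consists of
  an odd number of right cosets. This number divides \<open>|H| = 2^k\<close>, so it is then 1, \<open>g\<close> normalises
  \<open>H\<close>, \<open>g^2 \<in> H\<close>, and the coset \<open>H g\<close> needs an involution. Hence \<open>H\<close> is a perfect code iff every
  coset \<open>H y\<close> with \<open>y\<close> normalising \<open>H\<close> and \<open>y^2 \<in> H\<close> contains an involution.

  For cyclic \<open>H = \<langle>a\<rangle>\<close>, such a coset without involutions makes \<open>K = H \<union> H y\<close> a group of order
  \<open>2 |H|\<close>, and a congruence modulo \<open>2^k\<close> for the exponents in \<open>y\<inverse> a y = a^r\<close> and \<open>y^2 = a^s\<close>
  shows that \<open>K\<close> is cyclic or generalised quaternion. Conversely, every involution of these groups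
  is a square, so it lies in the index-two subgroup \<open>H\<close> and not in a coset \<open>H y \<subseteq> K - H\<close>.
\<close>

lemma (in group) mult_inv_cancel_left [simp]:
  "x \<in> carrier G \<Longrightarrow> y \<in> carrier G \<Longrightarrow> x \<otimes> (inv x \<otimes> y) = y"
  by (simp add: m_assoc [symmetric])

lemma (in group) inv_mult_cancel_left [simp]:
  "x \<in> carrier G \<Longrightarrow> y \<in> carrier G \<Longrightarrow> inv x \<otimes> (x \<otimes> y) = y"
  by (simp add: m_assoc [symmetric])

lemma subgroup_generated_eq_carrier_update:
  "subgroup_generated G S = G\<lparr>carrier := carrier (subgroup_generated G S)\<rparr>"
  by (simp add: subgroup_generated_def carrier_subgroup_generated)

lemma (in group) conj_int_pow:
  assumes x: "x \<in> carrier G" and y: "y \<in> carrier G"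
  shows "inv y \<otimes> x [^] (i::int) \<otimes> y = (inv y \<otimes> x \<otimes> y) [^] i"
proof -
  have "(\<lambda>u. inv y \<otimes> u \<otimes> y) \<in> hom G G"
    using y by (intro homI) (simp_all add: m_assoc)
  then show ?thesis
    using hom_int_pow[OF _ x is_group is_group] by blast
qed

lemma (in group) inv_conj_swap:
  assumes x: "x \<in> carrier G" and y: "y \<in> carrier G" and conj: "inv y \<otimes> x \<otimes> y = inv x"
  shows "y \<otimes> x [^] (i::int) = x [^] (- i) \<otimes> y"
proof -
  have "inv y \<otimes> x [^] (- i) \<otimes> y = x [^] i"
    using conj_int_pow[OF x y, of "- i"] conj int_pow_inv[OF x] int_pow_neg[OF x] x by simp
  then have "y \<otimes> (inv y \<otimes> x [^] (- i) \<otimes> y) = y \<otimes> x [^] i"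
    by simp
  then show ?thesis
    using x y by (simp add: m_assoc)
qed

lemma (in group) square_int_pow_mult_eq:
  assumes a: "a \<in> carrier G" and y: "y \<in> carrier G"
    and r: "inv y \<otimes> a \<otimes> y = a [^] (r::int)" and s: "y \<otimes> y = a [^] (s::int)"
  shows "(a [^] i \<otimes> y) \<otimes> (a [^] i \<otimes> y) = a [^] ((1 + r) * i + s)"
proof -
  have "(a [^] i \<otimes> y) \<otimes> (a [^] i \<otimes> y) = a [^] i \<otimes> (y \<otimes> y) \<otimes> (inv y \<otimes> a [^] i \<otimes> y)"
    using a y by (simp add: m_assoc)
  also have "\<dots> = a [^] i \<otimes> a [^] s \<otimes> a [^] (r * i)"
    unfolding s conj_int_pow[OF a y] r int_pow_pow[OF a] ..
  also have "\<dots> = a [^] ((1 + r) * i + s)"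
    by (simp add: int_pow_mult[OF a, symmetric] algebra_simps)
  finally show ?thesis .
qed

definition double_coset :: "('a, 'b) monoid_scheme \<Rightarrow> 'a set \<Rightarrow> 'a \<Rightarrow> 'a set" where
  "double_coset G H g = {h1 \<otimes>\<^bsub>G\<^esub> g \<otimes>\<^bsub>G\<^esub> h2 | h1 h2. h1 \<in> H \<and> h2 \<in> H}"

definition inv_closed_transversal_on :: "('a, 'b) monoid_scheme \<Rightarrow> 'a set \<Rightarrow> 'a set \<Rightarrow> 'a set \<Rightarrow> bool" where
  "inv_closed_transversal_on G H U T \<longleftrightarrow>
     T \<subseteq> U \<and> (\<forall>t\<in>T. inv\<^bsub>G\<^esub> t \<in> T) \<and> (\<forall>x\<in>U. \<exists>!t. t \<in> T \<and> t \<in> H #>\<^bsub>G\<^esub> x)"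

definition involution_in_normalizing_cosets :: "('a, 'b) monoid_scheme \<Rightarrow> 'a set \<Rightarrow> bool" where
  "involution_in_normalizing_cosets G H \<longleftrightarrow>
     (\<forall>y\<in>carrier G. H #>\<^bsub>G\<^esub> y = y <#\<^bsub>G\<^esub> H \<and> y \<otimes>\<^bsub>G\<^esub> y \<in> H \<longrightarrow>
        (\<exists>t\<in>H #>\<^bsub>G\<^esub> y. t \<otimes>\<^bsub>G\<^esub> t = \<one>\<^bsub>G\<^esub>))"

locale group_subgroup = group G for G (structure) +
  fixes H
  assumes subgroup_H: "subgroup H G"
begin

sublocale H: subgroup H G
  by (fact subgroup_H)

lemma rcos_iff: "x \<in> carrier G \<Longrightarrow> z \<in> H #> x \<longleftrightarrow> z \<in> carrier G \<and> z \<otimes> inv x \<in> H"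
  using H.rcos_module[OF is_group] r_coset_subset_G[OF H.subset] by blast

lemma lcos_iff: "x \<in> carrier G \<Longrightarrow> z \<in> x <# H \<longleftrightarrow> z \<in> carrier G \<and> inv x \<otimes> z \<in> H"
  using H.lcos_module_imp[OF is_group] H.lcos_module_rev[OF is_group] l_coset_subset_G[OF H.subset]
  by blast

lemma rcos_eq_iff:
  assumes x: "x \<in> carrier G" and y: "y \<in> carrier G"
  shows "H #> x = H #> y \<longleftrightarrow> x \<otimes> inv y \<in> H"
proof
  assume "H #> x = H #> y"
  then have "x \<in> H #> y"
    using rcos_self[OF x subgroup_H] by simp
  then show "x \<otimes> inv y \<in> H"
    using rcos_iff[OF y] by blast
next
  assume "x \<otimes> inv y \<in> H"
  then have "x \<in> H #> y"
    using rcos_iff[OF y] x by blast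
  then show "H #> x = H #> y"
    using repr_independence[OF _ y subgroup_H] by simp
qed

lemma inv_mem_iff: "x \<in> carrier G \<Longrightarrow> inv x \<in> H \<longleftrightarrow> x \<in> H"
  by (metis H.m_inv_closed inv_inv)

lemma normalizing_conj_closed:
  assumes "y \<in> carrier G" "H #> y = y <# H" "h \<in> H"
  shows "y \<otimes> h \<otimes> inv y \<in> H" and "inv y \<otimes> h \<otimes> y \<in> H"
proof -
  have "y \<otimes> h \<in> y <# H"
    using assms lcos_iff[of y "y \<otimes> h"] by simp
  then show "y \<otimes> h \<otimes> inv y \<in> H"
    using assms(1,2) rcos_iff[OF assms(1), of "y \<otimes> h"] by simp
  have "h \<otimes> y \<in> H #> y"
    using assms rcos_iff[of y "h \<otimes> y"] by (simp add: m_assoc)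
  then show "inv y \<otimes> h \<otimes> y \<in> H"
    using assms lcos_iff[OF assms(1), of "h \<otimes> y"] by (simp add: m_assoc)
qed

lemma rcosets_eq_rcos: "C \<in> rcosets H \<Longrightarrow> x \<in> C \<Longrightarrow> C = H #> x"
  unfolding RCOSETS_def using repr_independence[OF _ _ subgroup_H] by blast

lemma Union_rcos_image:
  assumes "U \<subseteq> carrier G" "\<And>x. x \<in> U \<Longrightarrow> H #> x \<subseteq> U"
  shows "\<Union>((\<lambda>x. H #> x) ` U) = U"
  using assms rcos_self[OF _ subgroup_H] by blast

lemma card_eq_card_rcos_image_mult:
  assumes U: "finite U" "U \<subseteq> carrier G" and closed: "\<And>x. x \<in> U \<Longrightarrow> H #> x \<subseteq> U"
  shows "card U = card ((\<lambda>x. H #> x) ` U) * card H"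
proof -
  let ?\<Omega> = "(\<lambda>x. H #> x) ` U"
  have \<Omega>: "?\<Omega> \<subseteq> rcosets H"
    using U(2) rcosetsI[OF H.subset] by blast
  have "card H * card ?\<Omega> = card (\<Union>?\<Omega>)"
  proof (rule card_partition)
    show "finite ?\<Omega>" and "finite (\<Union>?\<Omega>)"
      using U Union_rcos_image[OF U(2) closed] by simp_all
    show "card C = card H" if "C \<in> ?\<Omega>" for C
      using that \<Omega> card_rcosets_equal[OF _ H.subset] by auto
    show "C \<inter> D = {}" if "C \<in> ?\<Omega>" "D \<in> ?\<Omega>" "C \<noteq> D" for C D
      using that \<Omega> rcos_disjoint[OF subgroup_H] unfolding pairwise_def disjnt_def by blast
  qed
  then show ?thesis
    using Union_rcos_image[OF U(2) closed] by (simp add: mult.commute)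
qed

section \<open>Perfect codes and inverse-closed transversals\<close>

lemma cayley_connection_set_Diff:
  assumes T: "T \<subseteq> carrier G" "\<And>t. t \<in> T \<Longrightarrow> inv t \<in> T"
  shows "cayley_connection_set G (T - H)"
  unfolding cayley_connection_set_def
proof
  show "T - H \<subseteq> carrier G - {\<one>}"
    using T(1) by auto
  show "\<forall>s\<in>T - H. inv s \<in> T - H"
    using T inv_mem_iff by blast
qed

text \<open>The right coset \<open>H x\<inverse>\<close> of a vertex \<open>x \<notin> H\<close> contains exactly one \<open>s \<in> T\<close>,
  and \<open>s x\<close> is then the unique neighbour of \<open>x\<close> in \<open>H\<close>.\<close>
lemma subgroup_perfect_code_if_inv_closed_transversal:
  assumes "inv_closed_transversal_on G H (carrier G) T"
  shows "subgroup_perfect_code G H"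
proof -
  have T: "T \<subseteq> carrier G" "\<And>t. t \<in> T \<Longrightarrow> inv t \<in> T"
    and T_unique: "\<And>x. x \<in> carrier G \<Longrightarrow> \<exists>!t. t \<in> T \<and> t \<in> H #> x"
    using assms unfolding inv_closed_transversal_on_def by auto
  have "cayley_perfect_code G (T - H) H"
    unfolding cayley_perfect_code_def
  proof (intro conjI ballI impI)
    show "H \<subseteq> carrier G"
      by (rule H.subset)
  next
    fix c1 c2 assume c: "c1 \<in> H" "c2 \<in> H" "c1 \<noteq> c2"
    show "\<not> cayley_adj G (T - H) c1 c2"
    proof
      assume "cayley_adj G (T - H) c1 c2"
      then obtain s where s: "s \<in> T - H" "c2 = s \<otimes> c1"
        unfolding cayley_adj_def by blast
      moreover have "s \<in> carrier G"
        using s(1) T(1) by blast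
      ultimately have "s = c2 \<otimes> inv c1"
        using c by (simp add: m_assoc)
      then show False
        using s(1) c by simp
    qed
  next
    fix v assume v: "v \<in> carrier G - H"
    then have vc: "v \<in> carrier G" and ivc: "inv v \<in> carrier G"
      by auto
    obtain t where t: "t \<in> T" "t \<in> H #> inv v"
      and t_unique: "\<And>s. s \<in> T \<Longrightarrow> s \<in> H #> inv v \<Longrightarrow> s = t"
      using T_unique[OF ivc] by blast
    have tv: "t \<otimes> v \<in> H"
      using t(2) rcos_iff[OF ivc] vc by simp
    have "t \<notin> H"
    proof
      assume "t \<in> H"
      then have "inv t \<otimes> (t \<otimes> v) \<in> H"
        using tv by simp
      then show False
        using t(1) T(1) vc v by auto
    qed
    show "\<exists>!c. c \<in> H \<and> cayley_adj G (T - H) v c"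
    proof (rule ex1I[of _ "t \<otimes> v"])
      show "t \<otimes> v \<in> H \<and> cayley_adj G (T - H) v (t \<otimes> v)"
        unfolding cayley_adj_def using tv t(1) \<open>t \<notin> H\<close> by blast
    next
      fix c assume "c \<in> H \<and> cayley_adj G (T - H) v c"
      then obtain s where s: "s \<in> T - H" "c = s \<otimes> v" "c \<in> H"
        unfolding cayley_adj_def by blast
      then have "s \<in> H #> inv v"
        using rcos_iff[OF ivc] T(1) vc by auto
      then show "c = t \<otimes> v"
        using t_unique s by blast
    qed
  qed
  then show ?thesis
    unfolding subgroup_perfect_code_def using cayley_connection_set_Diff[OF T] by blast
qed

text \<open>The neighbours \<open>s y\<inverse>\<close> and \<open>s\<inverse> y\<inverse>\<close> of \<open>y\<inverse>\<close> both lie in \<open>H\<close>, so \<open>s = s\<inverse>\<close>.\<close>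
lemma involution_in_normalizing_cosets_if_perfect_code:
  assumes "subgroup_perfect_code G H"
  shows "involution_in_normalizing_cosets G H"
  unfolding involution_in_normalizing_cosets_def
proof (intro ballI impI)
  fix y assume y: "y \<in> carrier G" and normal: "H #> y = y <# H \<and> y \<otimes> y \<in> H"
  obtain S where S: "cayley_connection_set G S" and code: "cayley_perfect_code G S H"
    using assms unfolding subgroup_perfect_code_def by blast
  show "\<exists>t\<in>H #> y. t \<otimes> t = \<one>"
  proof (cases "y \<in> H")
    case True
    then have "\<one> \<in> H #> y"
      using rcos_iff[OF y] y by simp
    then show ?thesis
      by (intro bexI[of _ \<one>]) simp_all
  next
    case False
    have "inv y \<in> carrier G - H"
      using False y inv_mem_iff by simp
    then have "\<exists>!c. c \<in> H \<and> cayley_adj G S (inv y) c"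
      using code unfolding cayley_perfect_code_def by blast
    then obtain c where c: "c \<in> H" "cayley_adj G S (inv y) c"
      and c_unique: "\<And>c'. c' \<in> H \<Longrightarrow> cayley_adj G S (inv y) c' \<Longrightarrow> c' = c"
      by (elim ex1E) blast
    obtain s where s: "s \<in> S" "c = s \<otimes> inv y"
      using c(2) unfolding cayley_adj_def by blast
    have sc: "s \<in> carrier G" and inv_s: "inv s \<in> S"
      using S s(1) unfolding cayley_connection_set_def by blast+
    have s_eq: "s = c \<otimes> y"
      using s(2) sc y by (simp add: m_assoc)
    have "y \<otimes> c \<otimes> y = (y \<otimes> c \<otimes> inv y) \<otimes> (y \<otimes> y)"
      using y c(1) by (simp add: m_assoc)
    then have "y \<otimes> c \<otimes> y \<in> H"
      using normalizing_conj_closed(1)[OF y _ c(1)] normal by simp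
    then have "inv (y \<otimes> c \<otimes> y) \<in> H"
      by simp
    then have "inv s \<otimes> inv y \<in> H"
      using s_eq y c(1) by (simp add: inv_mult_group m_assoc)
    moreover have "cayley_adj G S (inv y) (inv s \<otimes> inv y)"
      unfolding cayley_adj_def using inv_s by blast
    ultimately have "inv s \<otimes> inv y = s \<otimes> inv y"
      using c_unique s(2) by blast
    then have "inv s = s"
      using sc y by simp
    then have "s \<otimes> s = \<one>"
      using r_inv[OF sc] by simp
    moreover have "s \<in> H #> y"
      using rcos_iff[OF y] s_eq sc c(1) y by (simp add: m_assoc)
    ultimately show ?thesis
      by blast
  qed
qed

section \<open>Double cosets\<close>

lemma double_coset_iff: "x \<in> double_coset G H g \<longleftrightarrow> (\<exists>a\<in>H. \<exists>b\<in>H. x = a \<otimes> g \<otimes> b)"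
  unfolding double_coset_def by blast

lemma double_coset_subset: "g \<in> carrier G \<Longrightarrow> double_coset G H g \<subseteq> carrier G"
  by (auto simp: double_coset_iff)

lemma double_coset_self: "g \<in> carrier G \<Longrightarrow> g \<in> double_coset G H g"
  unfolding double_coset_iff by (metis H.one_closed l_one r_one one_closed m_closed)

lemma double_coset_mult_closed:
  assumes g: "g \<in> carrier G" and x: "x \<in> double_coset G H g" and ab: "a \<in> H" "b \<in> H"
  shows "a \<otimes> x \<otimes> b \<in> double_coset G H g"
proof -
  obtain c d where cd: "c \<in> H" "d \<in> H" "x = c \<otimes> g \<otimes> d"
    using x unfolding double_coset_iff by blast
  then have "a \<otimes> x \<otimes> b = (a \<otimes> c) \<otimes> g \<otimes> (d \<otimes> b)"
    using ab g by (simp add: m_assoc)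
  then show ?thesis
    unfolding double_coset_iff using ab cd by blast
qed

lemma rcos_subset_double_coset:
  assumes "g \<in> carrier G" "x \<in> double_coset G H g"
  shows "H #> x \<subseteq> double_coset G H g"
proof
  fix z assume "z \<in> H #> x"
  then obtain h where "h \<in> H" "z = h \<otimes> x"
    unfolding r_coset_def by blast
  moreover have "x \<in> carrier G"
    using assms double_coset_subset by blast
  ultimately show "z \<in> double_coset G H g"
    using double_coset_mult_closed[OF assms, of h \<one>] by simp
qed

lemma double_coset_eq:
  assumes g: "g \<in> carrier G" and x: "x \<in> double_coset G H g"
  shows "double_coset G H x = double_coset G H g"
proof -
  obtain c d where cd: "c \<in> H" "d \<in> H" "x = c \<otimes> g \<otimes> d"
    using x unfolding double_coset_iff by blast
  have xc: "x \<in> carrier G"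
    using x double_coset_subset[OF g] by blast
  have "inv c \<otimes> x \<otimes> inv d \<in> double_coset G H x"
    using double_coset_mult_closed[OF xc double_coset_self[OF xc]] cd(1,2) by simp
  moreover have "inv c \<otimes> x \<otimes> inv d = g"
    using cd g by (simp add: m_assoc)
  ultimately have "g \<in> double_coset G H x"
    by simp
  show ?thesis
  proof
    show "double_coset G H x \<subseteq> double_coset G H g"
      using double_coset_mult_closed[OF g x] by (auto simp: double_coset_iff[of _ x])
    show "double_coset G H g \<subseteq> double_coset G H x"
      using double_coset_mult_closed[OF xc \<open>g \<in> double_coset G H x\<close>]
      by (auto simp: double_coset_iff[of _ g])
  qed
qed

lemma inv_mem_double_coset_inv:
  assumes g: "g \<in> carrier G" and x: "x \<in> double_coset G H g"
  shows "inv x \<in> double_coset G H (inv g)"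
proof -
  obtain a b where ab: "a \<in> H" "b \<in> H" "x = a \<otimes> g \<otimes> b"
    using x unfolding double_coset_iff by blast
  then have "inv x = inv b \<otimes> inv g \<otimes> inv a"
    using g by (simp add: inv_mult_group m_assoc)
  then show ?thesis
    unfolding double_coset_iff using ab by blast
qed

lemma double_coset_Un_inv_eq:
  assumes g: "g \<in> carrier G" and x: "x \<in> double_coset G H g \<union> double_coset G H (inv g)"
  shows "double_coset G H x \<union> double_coset G H (inv x) =
    double_coset G H g \<union> double_coset G H (inv g)"
proof -
  have ig: "inv g \<in> carrier G"
    using g by simp
  consider (D) "x \<in> double_coset G H g" | (E) "x \<in> double_coset G H (inv g)"
    using x by blast
  then show ?thesis
  proof cases
    case D
    have "double_coset G H (inv x) = double_coset G H (inv g)"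
      using double_coset_eq[OF ig inv_mem_double_coset_inv[OF g D]] .
    then show ?thesis
      unfolding double_coset_eq[OF g D] by simp
  next
    case E
    have "inv x \<in> double_coset G H g"
      using inv_mem_double_coset_inv[OF ig E] g by simp
    then have "double_coset G H (inv x) = double_coset G H g"
      using double_coset_eq[OF g] by blast
    then show ?thesis
      unfolding double_coset_eq[OF ig E] by auto
  qed
qed

lemma card_double_coset_inv:
  assumes "finite (carrier G)" "g \<in> carrier G"
  shows "card (double_coset G H (inv g)) = card (double_coset G H g)"
proof -
  have le: "card (double_coset G H (inv x)) \<le> card (double_coset G H x)" if x: "x \<in> carrier G" for x
  proof -
    have "(\<lambda>y. inv y) ` double_coset G H (inv x) \<subseteq> double_coset G H x"
      using inv_mem_double_coset_inv[of "inv x"] x by auto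
    moreover have "inj_on (\<lambda>y. inv y) (double_coset G H (inv x))"
      using inv_inj double_coset_subset[of "inv x"] x inj_on_subset by blast
    ultimately show ?thesis
      using card_inj_on_le double_coset_subset[OF x] assms(1) finite_subset by (metis (no_types))
  qed
  show ?thesis
    using le[OF assms(2)] le[of "inv g"] assms(2) by simp
qed

lemma rcos_image_double_coset:
  assumes g: "g \<in> carrier G"
  shows "(\<lambda>x. H #> x) ` double_coset G H g = (\<lambda>h. H #> (g \<otimes> h)) ` H"
proof
  show "(\<lambda>x. H #> x) ` double_coset G H g \<subseteq> (\<lambda>h. H #> (g \<otimes> h)) ` H"
  proof
    fix C assume "C \<in> (\<lambda>x. H #> x) ` double_coset G H g"
    then obtain x where x: "x \<in> double_coset G H g" "C = H #> x"
      by blast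
    then obtain a b where ab: "a \<in> H" "b \<in> H" "C = H #> (a \<otimes> g \<otimes> b)"
      unfolding double_coset_iff by blast
    have "a \<otimes> g \<otimes> b \<otimes> inv (g \<otimes> b) = a"
      using ab g by (simp add: m_assoc inv_mult_group)
    then have "C = H #> (g \<otimes> b)"
      unfolding ab(3) using rcos_eq_iff ab g by simp
    then show "C \<in> (\<lambda>h. H #> (g \<otimes> h)) ` H"
      using ab(2) by blast
  qed
  show "(\<lambda>h. H #> (g \<otimes> h)) ` H \<subseteq> (\<lambda>x. H #> x) ` double_coset G H g"
  proof
    fix C assume "C \<in> (\<lambda>h. H #> (g \<otimes> h)) ` H"
    then obtain h where h: "h \<in> H" "C = H #> (g \<otimes> h)"
      by blast
    have "g \<otimes> h \<in> double_coset G H g"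
      using double_coset_mult_closed[OF g double_coset_self[OF g] H.one_closed h(1)] g h by simp
    then show "C \<in> (\<lambda>x. H #> x) ` double_coset G H g"
      using h(2) by blast
  qed
qed

lemma rcos_image_double_coset_subset_rcosets:
  "g \<in> carrier G \<Longrightarrow> (\<lambda>x. H #> x) ` double_coset G H g \<subseteq> rcosets H"
  using double_coset_subset rcosetsI[OF H.subset] by blast

lemma Union_rcos_image_double_coset:
  "g \<in> carrier G \<Longrightarrow> \<Union>((\<lambda>x. H #> x) ` double_coset G H g) = double_coset G H g"
  by (intro Union_rcos_image double_coset_subset rcos_subset_double_coset)

lemma card_rcos_image_double_coset_inv:
  assumes fin: "finite (carrier G)" and g: "g \<in> carrier G"
  shows "card ((\<lambda>x. H #> x) ` double_coset G H (inv g)) = card ((\<lambda>x. H #> x) ` double_coset G H g)"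
proof -
  have ig: "inv g \<in> carrier G"
    using g by simp
  have "card ((\<lambda>x. H #> x) ` double_coset G H g) * card H = card (double_coset G H g)"
    using card_eq_card_rcos_image_mult[OF finite_subset[OF double_coset_subset[OF g] fin]
        double_coset_subset[OF g] rcos_subset_double_coset[OF g]] by simp
  also have "\<dots> = card (double_coset G H (inv g))"
    using card_double_coset_inv[OF fin g] by simp
  also have "\<dots> = card ((\<lambda>x. H #> x) ` double_coset G H (inv g)) * card H"
    using card_eq_card_rcos_image_mult[OF finite_subset[OF double_coset_subset[OF ig] fin]
        double_coset_subset[OF ig] rcos_subset_double_coset[OF ig]] by simp
  finally show ?thesis
    using H.finite_imp_card_positive[OF fin] by simp
qed

text \<open>For \<open>C = H a g b\<close> and \<open>D = H c g\<inverse> f\<close> take \<open>t = f\<inverse> g b\<close>.\<close>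
lemma double_coset_rcosets_linked:
  assumes g: "g \<in> carrier G"
    and C: "C \<in> (\<lambda>x. H #> x) ` double_coset G H g" and D: "D \<in> (\<lambda>x. H #> x) ` double_coset G H (inv g)"
  shows "\<exists>t\<in>C. inv t \<in> D"
proof -
  obtain d e where "d \<in> double_coset G H g" "C = H #> d"
    and "e \<in> double_coset G H (inv g)" "D = H #> e"
    using C D by blast
  then obtain a b c f where ab: "a \<in> H" "b \<in> H" "C = H #> (a \<otimes> g \<otimes> b)"
    and cf: "c \<in> H" "f \<in> H" "D = H #> (c \<otimes> inv g \<otimes> f)"
    unfolding double_coset_iff by blast
  define t where "t = inv f \<otimes> g \<otimes> b"
  have tc: "t \<in> carrier G"
    unfolding t_def using cf ab g by simp
  have "t \<otimes> inv (a \<otimes> g \<otimes> b) = inv f \<otimes> inv a"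
    unfolding t_def using ab cf g by (simp add: inv_mult_group m_assoc)
  then have "t \<in> C"
    unfolding ab(3) using rcos_iff ab cf g tc by simp
  moreover have "inv t \<otimes> inv (c \<otimes> inv g \<otimes> f) = inv b \<otimes> inv c"
    unfolding t_def using ab cf g by (simp add: inv_mult_group m_assoc)
  then have "inv t \<in> D"
    unfolding cf(3) using rcos_iff ab cf g tc by simp
  ultimately show ?thesis
    by blast
qed

lemma subgroup_conj_stabilizer:
  assumes g: "g \<in> carrier G"
  shows "subgroup {h \<in> H. g \<otimes> h \<otimes> inv g \<in> H} G"
proof (rule subgroupI)
  show "{h \<in> H. g \<otimes> h \<otimes> inv g \<in> H} \<subseteq> carrier G"
    by auto
  have "\<one> \<in> {h \<in> H. g \<otimes> h \<otimes> inv g \<in> H}"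
    using g by simp
  then show "{h \<in> H. g \<otimes> h \<otimes> inv g \<in> H} \<noteq> {}"
    by blast
next
  fix h assume h: "h \<in> {h \<in> H. g \<otimes> h \<otimes> inv g \<in> H}"
  then have hH: "h \<in> H" and conj: "g \<otimes> h \<otimes> inv g \<in> H"
    by auto
  have "g \<otimes> inv h \<otimes> inv g = inv (g \<otimes> h \<otimes> inv g)"
    using hH g by (simp add: inv_mult_group m_assoc)
  also have "\<dots> \<in> H"
    by (rule H.m_inv_closed[OF conj])
  finally show "inv h \<in> {h \<in> H. g \<otimes> h \<otimes> inv g \<in> H}"
    using H.m_inv_closed[OF hH] by blast
next
  fix h h' assume "h \<in> {h \<in> H. g \<otimes> h \<otimes> inv g \<in> H}" "h' \<in> {h \<in> H. g \<otimes> h \<otimes> inv g \<in> H}"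
  then have hH: "h \<in> H" "h' \<in> H" and conj: "g \<otimes> h \<otimes> inv g \<in> H" "g \<otimes> h' \<otimes> inv g \<in> H"
    by auto
  have "g \<otimes> (h \<otimes> h') \<otimes> inv g = (g \<otimes> h \<otimes> inv g) \<otimes> (g \<otimes> h' \<otimes> inv g)"
    using hH g by (simp add: m_assoc)
  also have "\<dots> \<in> H"
    by (rule H.m_closed[OF conj])
  finally show "h \<otimes> h' \<in> {h \<in> H. g \<otimes> h \<otimes> inv g \<in> H}"
    using H.m_closed[OF hH] by blast
qed

lemma fibre_rcos_mult_eq:
  assumes g: "g \<in> carrier G" and h0: "h0 \<in> H"
  shows "{h. h \<in> H \<and> H #> (g \<otimes> h) = H #> (g \<otimes> h0)} = {h \<in> H. g \<otimes> h \<otimes> inv g \<in> H} #> h0"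
proof -
  have L: "subgroup {h \<in> H. g \<otimes> h \<otimes> inv g \<in> H} G"
    by (rule subgroup_conj_stabilizer[OF g])
  have "H #> (g \<otimes> h) = H #> (g \<otimes> h0) \<longleftrightarrow> g \<otimes> (h \<otimes> inv h0) \<otimes> inv g \<in> H" if "h \<in> H" for h
  proof -
    have "g \<otimes> h \<otimes> inv (g \<otimes> h0) = g \<otimes> (h \<otimes> inv h0) \<otimes> inv g"
      using that h0 g by (simp add: m_assoc inv_mult_group)
    then show ?thesis
      using rcos_eq_iff that h0 g by simp
  qed
  moreover have "h \<in> {h \<in> H. g \<otimes> h \<otimes> inv g \<in> H} #> h0 \<longleftrightarrow>
      h \<in> H \<and> g \<otimes> (h \<otimes> inv h0) \<otimes> inv g \<in> H" for h
  proof (cases "h \<in> carrier G")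
    case True
    have "h \<otimes> inv h0 \<in> H \<longleftrightarrow> h \<in> H"
    proof
      assume "h \<otimes> inv h0 \<in> H"
      then have "h \<otimes> inv h0 \<otimes> h0 \<in> H"
        using h0 by simp
      then show "h \<in> H"
        using True h0 by (simp add: m_assoc)
    qed (use h0 in simp)
    then show ?thesis
      using subgroup.rcos_module[OF L is_group _ True] h0 by auto
  next
    case False
    have "h0 \<in> carrier G"
      using h0 by simp
    then show ?thesis
      using r_coset_subset_G[OF subgroup.subset[OF L]] False H.mem_carrier by blast
  qed
  ultimately show ?thesis
    by blast
qed

lemma card_rcosets_in_double_coset_dvd:
  assumes fin: "finite (carrier G)" and g: "g \<in> carrier G"
  shows "card ((\<lambda>x. H #> x) ` double_coset G H g) dvd card H"
proof -
  define f where "f h = H #> (g \<otimes> h)" for h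
  define L where "L = {h \<in> H. g \<otimes> h \<otimes> inv g \<in> H}"
  have L_sub: "L \<subseteq> carrier G"
    unfolding L_def by auto
  have "card H = (\<Sum>C\<in>f ` H. card {h. h \<in> H \<and> f h = C})"
    unfolding card_eq_sum by (rule sum.image_gen[OF finite_subset[OF H.subset fin]])
  also have "\<dots> = (\<Sum>C\<in>f ` H. card L)"
  proof (rule sum.cong)
    fix C assume "C \<in> f ` H"
    then obtain h0 where h0: "h0 \<in> H" "C = f h0"
      by blast
    then have "{h. h \<in> H \<and> f h = C} = L #> h0"
      unfolding f_def L_def using fibre_rcos_mult_eq[OF g] by simp
    then show "card {h. h \<in> H \<and> f h = C} = card L"
      using card_rcosets_equal[OF rcosetsI[OF L_sub] L_sub, symmetric] h0 by simp
  qed simp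
  finally show ?thesis
    using rcos_image_double_coset[OF g] unfolding f_def by simp
qed

lemma double_coset_eq_rcos_if_card_one:
  assumes g: "g \<in> carrier G" and one: "card ((\<lambda>x. H #> x) ` double_coset G H g) = 1"
  shows "double_coset G H g = H #> g"
proof
  obtain Y where Y: "(\<lambda>x. H #> x) ` double_coset G H g = {Y}"
    using card_1_singletonE[OF one] by blast
  show "double_coset G H g \<subseteq> H #> g"
  proof
    fix x assume x: "x \<in> double_coset G H g"
    have "H #> x \<in> (\<lambda>x. H #> x) ` double_coset G H g" "H #> g \<in> (\<lambda>x. H #> x) ` double_coset G H g"
      using x double_coset_self[OF g] by blast+
    then have "H #> x = H #> g"
      unfolding Y by simp
    moreover have "x \<in> H #> x"
      using rcos_self[OF _ subgroup_H] x double_coset_subset[OF g] by auto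
    ultimately show "x \<in> H #> g"
      by simp
  qed
  show "H #> g \<subseteq> double_coset G H g"
    using rcos_subset_double_coset[OF g double_coset_self[OF g]] .
qed

lemma rcos_eq_lcos_if_double_coset_subset:
  assumes fin: "finite (carrier G)" and g: "g \<in> carrier G"
    and sub: "double_coset G H g \<subseteq> H #> g"
  shows "H #> g = g <# H"
proof -
  have lcos_sub: "g <# H \<subseteq> H #> g"
  proof
    fix z assume "z \<in> g <# H"
    then obtain h where h: "h \<in> H" "z = g \<otimes> h"
      unfolding l_coset_def by blast
    then have "z \<in> double_coset G H g"
      using double_coset_mult_closed[OF g double_coset_self[OF g] H.one_closed h(1)] g by simp
    then show "z \<in> H #> g"
      using sub by blast
  qed
  have "g <# H \<in> lcosets H"
    unfolding LCOSETS_def using g by blast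
  then have "card (g <# H) = card H"
    using l_card_cosets_equal[OF _ H.subset fin] by simp
  also have "\<dots> = card (H #> g)"
    using card_rcosets_equal[OF rcosetsI[OF H.subset g] H.subset] .
  finally have "g <# H = H #> g"
    using card_subset_eq[OF finite_subset[OF r_coset_subset_G[OF H.subset g] fin] lcos_sub] by blast
  then show ?thesis
    by simp
qed

section \<open>Construction of an inverse-closed transversal\<close>

lemma inv_closed_transversal_on_image:
  assumes \<Omega>: "\<Omega> \<subseteq> rcosets H" and \<rho>: "\<And>C. C \<in> \<Omega> \<Longrightarrow> \<rho> C \<in> C"
    and inv_\<rho>: "\<And>C. C \<in> \<Omega> \<Longrightarrow> \<exists>D\<in>\<Omega>. inv (\<rho> C) = \<rho> D"
  shows "inv_closed_transversal_on G H (\<Union>\<Omega>) (\<rho> ` \<Omega>)"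
  unfolding inv_closed_transversal_on_def
proof (intro conjI ballI)
  show "\<rho> ` \<Omega> \<subseteq> \<Union>\<Omega>"
    using \<rho> by blast
  show "inv t \<in> \<rho> ` \<Omega>" if "t \<in> \<rho> ` \<Omega>" for t
    using that inv_\<rho> by blast
  fix x assume "x \<in> \<Union>\<Omega>"
  then obtain C where C: "C \<in> \<Omega>" "C = H #> x"
    using \<Omega> rcosets_eq_rcos by blast
  show "\<exists>!t. t \<in> \<rho> ` \<Omega> \<and> t \<in> H #> x"
  proof (rule ex1I[of _ "\<rho> C"])
    show "\<rho> C \<in> \<rho> ` \<Omega> \<and> \<rho> C \<in> H #> x"
      using C \<rho> by blast
    fix t assume "t \<in> \<rho> ` \<Omega> \<and> t \<in> H #> x"
    then obtain D where D: "D \<in> \<Omega>" "t = \<rho> D" "\<rho> D \<in> C"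
      using C(2) by blast
    have "D = H #> \<rho> D" "C = H #> \<rho> D"
      using \<Omega> rcosets_eq_rcos \<rho>[OF D(1)] D(1,3) C(1) by blast+
    then have "D = C"
      by simp
    then show "t = \<rho> C"
      using D(2) by simp
  qed
qed

lemma inv_closed_transversal_on_pairing:
  assumes \<Omega>: "\<Omega>1 \<subseteq> rcosets H" "\<Omega>2 \<subseteq> rcosets H" "\<Omega>1 \<inter> \<Omega>2 = {}"
    and card: "finite \<Omega>1" "finite \<Omega>2" "card \<Omega>1 = card \<Omega>2"
    and linked: "\<And>C D. C \<in> \<Omega>1 \<Longrightarrow> D \<in> \<Omega>2 \<Longrightarrow> \<exists>t\<in>C. inv t \<in> D"
  shows "\<exists>T. inv_closed_transversal_on G H (\<Union>(\<Omega>1 \<union> \<Omega>2)) T"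
proof -
  obtain \<beta> where \<beta>: "bij_betw \<beta> \<Omega>1 \<Omega>2"
    using finite_same_card_bij[OF card] by blast
  define rep where "rep C = (SOME t. t \<in> C \<and> inv t \<in> \<beta> C)" for C
  have rep: "rep C \<in> C" "inv (rep C) \<in> \<beta> C" if "C \<in> \<Omega>1" for C
  proof -
    have "\<exists>t. t \<in> C \<and> inv t \<in> \<beta> C"
      using linked[OF that bij_betw_apply[OF \<beta> that]] by blast
    then show "rep C \<in> C" "inv (rep C) \<in> \<beta> C"
      unfolding rep_def by (metis (no_types, lifting) someI_ex)+
  qed
  have rep_carrier: "rep C \<in> carrier G" if "C \<in> \<Omega>1" for C
    using rep(1)[OF that] that \<Omega>(1) H.rcosets_carrier[OF is_group] by blast
  define \<rho> where "\<rho> C = (if C \<in> \<Omega>1 then rep C else inv (rep (inv_into \<Omega>1 \<beta> C)))" for C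
  have \<rho>: "\<rho> C \<in> C \<and> (\<exists>D\<in>\<Omega>1 \<union> \<Omega>2. inv (\<rho> C) = \<rho> D)" if C: "C \<in> \<Omega>1 \<union> \<Omega>2" for C
  proof (cases "C \<in> \<Omega>1")
    case True
    have "\<beta> C \<in> \<Omega>2" "\<beta> C \<notin> \<Omega>1" "inv_into \<Omega>1 \<beta> (\<beta> C) = C"
      using True \<beta> \<Omega>(3) bij_betw_apply bij_betw_inv_into_left by fastforce+
    then show ?thesis
      unfolding \<rho>_def using True rep(1) by auto
  next
    case False
    then have C2: "C \<in> \<Omega>2"
      using C by blast
    let ?D = "inv_into \<Omega>1 \<beta> C"
    have "?D \<in> \<Omega>1" "\<beta> ?D = C"
      using C2 \<beta> bij_betw_inv_into_right bij_betw_apply[OF bij_betw_inv_into[OF \<beta>]] by fastforce+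
    then show ?thesis
      unfolding \<rho>_def using False rep(2)[of ?D] rep_carrier[of ?D] by auto
  qed
  have "inv_closed_transversal_on G H (\<Union>(\<Omega>1 \<union> \<Omega>2)) (\<rho> ` (\<Omega>1 \<union> \<Omega>2))"
    using inv_closed_transversal_on_image[of "\<Omega>1 \<union> \<Omega>2" \<rho>] \<Omega>(1,2) \<rho> by blast
  then show ?thesis
    by blast
qed

lemma inv_closed_transversal_on_even:
  assumes \<Omega>: "\<Omega> \<subseteq> rcosets H" "finite \<Omega>" "even (card \<Omega>)"
    and linked: "\<And>C D. C \<in> \<Omega> \<Longrightarrow> D \<in> \<Omega> \<Longrightarrow> \<exists>t\<in>C. inv t \<in> D"
  shows "\<exists>T. inv_closed_transversal_on G H (\<Union>\<Omega>) T"
proof -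
  obtain \<Omega>1 where \<Omega>1: "\<Omega>1 \<subseteq> \<Omega>" "card \<Omega>1 = card \<Omega> div 2" "finite \<Omega>1"
    using obtain_subset_with_card_n[of "card \<Omega> div 2" \<Omega>] by auto
  have "card (\<Omega> - \<Omega>1) = card \<Omega>1"
    using card_Diff_subset[OF \<Omega>1(3) \<Omega>1(1)] \<Omega>1(2) \<Omega>(3) by auto
  then have "\<exists>T. inv_closed_transversal_on G H (\<Union>(\<Omega>1 \<union> (\<Omega> - \<Omega>1))) T"
    by (intro inv_closed_transversal_on_pairing) (use \<Omega> \<Omega>1 linked in auto)
  moreover have "\<Omega>1 \<union> (\<Omega> - \<Omega>1) = \<Omega>"
    using \<Omega>1(1) by blast
  ultimately show ?thesis
    by (simp only:)
qed

lemma inv_closed_transversal_on_normalizing_rcos: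
  assumes invol: "involution_in_normalizing_cosets G H"
    and y: "y \<in> carrier G" and normal: "H #> y = y <# H" and inv_y: "inv y \<in> H #> y"
  shows "\<exists>T. inv_closed_transversal_on G H (H #> y) T"
proof -
  have "inv (inv y \<otimes> inv y) \<in> H"
    using inv_y rcos_iff[OF y] by simp
  then have "y \<otimes> y \<in> H"
    using y by (simp add: inv_mult_group)
  then obtain t where t: "t \<in> H #> y" "t \<otimes> t = \<one>"
    using invol y normal unfolding involution_in_normalizing_cosets_def by blast
  have "t \<in> carrier G"
    using t(1) rcos_iff[OF y] by blast
  then have "inv t = t"
    using inv_equality[OF t(2)] by blast
  then have "inv_closed_transversal_on G H (\<Union>{H #> y}) ((\<lambda>_. t) ` {H #> y})"
    using inv_closed_transversal_on_image[of "{H #> y}" "\<lambda>_. t"] rcosetsI[OF H.subset y] t(1)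
    by simp
  then show ?thesis
    by auto
qed

lemma inv_closed_transversal_on_distinct_double_cosets:
  assumes fin: "finite (carrier G)" and g: "g \<in> carrier G"
    and distinct: "inv g \<notin> double_coset G H g"
  shows "\<exists>T. inv_closed_transversal_on G H (double_coset G H g \<union> double_coset G H (inv g)) T"
proof -
  let ?D = "double_coset G H g" and ?E = "double_coset G H (inv g)"
  have ig: "inv g \<in> carrier G"
    using g by simp
  have disjoint: "(\<lambda>x. H #> x) ` ?D \<inter> (\<lambda>x. H #> x) ` ?E = {}"
  proof (rule ccontr)
    assume "(\<lambda>x. H #> x) ` ?D \<inter> (\<lambda>x. H #> x) ` ?E \<noteq> {}"
    then obtain d e where de: "d \<in> ?D" "e \<in> ?E" "H #> d = H #> e"
      by blast
    have "d \<in> H #> e"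
      using rcos_self[OF _ subgroup_H, of d] de double_coset_subset[OF g] by auto
    then have "d \<in> ?E"
      using rcos_subset_double_coset[OF ig de(2)] by blast
    then have "?D = ?E"
      using double_coset_eq[OF g de(1)] double_coset_eq[OF ig \<open>d \<in> ?E\<close>] by simp
    then show False
      using distinct double_coset_self[OF ig] by simp
  qed
  have "\<exists>T. inv_closed_transversal_on G H (\<Union>((\<lambda>x. H #> x) ` ?D \<union> (\<lambda>x. H #> x) ` ?E)) T"
    using inv_closed_transversal_on_pairing[OF rcos_image_double_coset_subset_rcosets[OF g]
        rcos_image_double_coset_subset_rcosets[OF ig] disjoint]
      card_rcos_image_double_coset_inv[OF fin g] double_coset_rcosets_linked[OF g] fin
      double_coset_subset[OF g] double_coset_subset[OF ig] finite_subset
    by (metis finite_imageI)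
  then show ?thesis
    unfolding Union_Un_distrib Union_rcos_image_double_coset[OF g] Union_rcos_image_double_coset[OF ig] .
qed

lemma inv_closed_transversal_on_self_inverse_double_coset:
  assumes fin: "finite (carrier G)" and pow: "card H = 2 ^ k"
    and invol: "involution_in_normalizing_cosets G H" and g: "g \<in> carrier G"
    and self_inverse: "inv g \<in> double_coset G H g"
  shows "\<exists>T. inv_closed_transversal_on G H (double_coset G H g) T"
proof -
  let ?D = "double_coset G H g"
  let ?\<Omega> = "(\<lambda>x. H #> x) ` ?D"
  have "card ?\<Omega> dvd 2 ^ k"
    using card_rcosets_in_double_coset_dvd[OF fin g] pow by simp
  then obtain j where j: "card ?\<Omega> = 2 ^ j"
    using divides_primepow_nat[OF two_is_prime_nat] by blast
  show ?thesis
  proof (cases "j = 0")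
    case True
    then have D_eq: "?D = H #> g"
      using double_coset_eq_rcos_if_card_one[OF g] j by simp
    have "H #> g = g <# H"
      using rcos_eq_lcos_if_double_coset_subset[OF fin g] D_eq by simp
    then show ?thesis
      using inv_closed_transversal_on_normalizing_rcos[OF invol g] self_inverse D_eq by simp
  next
    case False
    then have "even (card ?\<Omega>)"
      using j by simp
    have \<Omega>_eq: "?\<Omega> = (\<lambda>x. H #> x) ` double_coset G H (inv g)"
      using double_coset_eq[OF g self_inverse] by simp
    have "\<exists>t\<in>C. inv t \<in> C'" if "C \<in> ?\<Omega>" "C' \<in> ?\<Omega>" for C C'
    proof -
      have "C' \<in> (\<lambda>x. H #> x) ` double_coset G H (inv g)"
        using that(2) \<Omega>_eq by simp
      then show ?thesis
        using double_coset_rcosets_linked[OF g that(1)] by blast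
    qed
    moreover have "finite ?\<Omega>"
      using finite_subset[OF double_coset_subset[OF g] fin] by simp
    ultimately have "\<exists>T. inv_closed_transversal_on G H (\<Union>?\<Omega>) T"
      using inv_closed_transversal_on_even[OF rcos_image_double_coset_subset_rcosets[OF g]]
        \<open>even (card ?\<Omega>)\<close> by blast
    then show ?thesis
      unfolding Union_rcos_image_double_coset[OF g] .
  qed
qed

lemma inv_closed_transversal_on_double_cosets:
  assumes fin: "finite (carrier G)" and pow: "card H = 2 ^ k"
    and invol: "involution_in_normalizing_cosets G H" and g: "g \<in> carrier G"
  shows "\<exists>T. inv_closed_transversal_on G H (double_coset G H g \<union> double_coset G H (inv g)) T"
proof (cases "inv g \<in> double_coset G H g")
  case True
  then show ?thesis
    using inv_closed_transversal_on_self_inverse_double_coset[OF fin pow invol g]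
      double_coset_eq[OF g True] by simp
qed (use inv_closed_transversal_on_distinct_double_cosets[OF fin g] in blast)

lemma inv_closed_transversal_on_Union:
  assumes disjoint: "pairwise disjnt \<U>"
    and closed: "\<And>U x. U \<in> \<U> \<Longrightarrow> x \<in> U \<Longrightarrow> H #> x \<subseteq> U"
    and parts: "\<And>U. U \<in> \<U> \<Longrightarrow> \<exists>T. inv_closed_transversal_on G H U T"
  shows "\<exists>T. inv_closed_transversal_on G H (\<Union>\<U>) T"
proof -
  define \<tau> where "\<tau> U = (SOME T. inv_closed_transversal_on G H U T)" for U
  have \<tau>: "inv_closed_transversal_on G H U (\<tau> U)" if "U \<in> \<U>" for U
    using someI_ex[OF parts[OF that]] unfolding \<tau>_def .
  define T where "T = (\<Union>U\<in>\<U>. \<tau> U)"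
  have T_sub: "T \<subseteq> \<Union>\<U>"
    using \<tau> unfolding T_def inv_closed_transversal_on_def by blast
  have T_inv: "inv t \<in> T" if "t \<in> T" for t
    using that \<tau> unfolding T_def inv_closed_transversal_on_def by blast
  have T_unique: "\<exists>!t. t \<in> T \<and> t \<in> H #> x" if U: "U \<in> \<U>" and x: "x \<in> U" for U x
  proof -
    have in_\<tau>: "s \<in> \<tau> U" if s: "s \<in> T" "s \<in> H #> x" for s
    proof -
      obtain V where V: "V \<in> \<U>" "s \<in> \<tau> V"
        using s(1) unfolding T_def by blast
      then have "s \<in> V"
        using \<tau> unfolding inv_closed_transversal_on_def by blast
      moreover have "s \<in> U"
        using closed[OF U x] s(2) by blast
      ultimately have "V = U"
        using disjoint U V(1) unfolding pairwise_def disjnt_def by blast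
      then show ?thesis
        using V(2) by simp
    qed
    obtain t where t: "t \<in> \<tau> U" "t \<in> H #> x"
      and t_unique: "\<And>s. s \<in> \<tau> U \<Longrightarrow> s \<in> H #> x \<Longrightarrow> s = t"
      using \<tau>[OF U] x unfolding inv_closed_transversal_on_def by blast
    show ?thesis
    proof (rule ex1I[of _ t])
      show "t \<in> T \<and> t \<in> H #> x"
        using t U unfolding T_def by blast
    qed (use in_\<tau> t_unique in blast)
  qed
  show ?thesis
    unfolding inv_closed_transversal_on_def
  proof (intro exI[of _ T] conjI ballI T_sub T_inv)
    fix x assume "x \<in> \<Union>\<U>"
    then obtain U where "U \<in> \<U>" "x \<in> U"
      by blast
    then show "\<exists>!t. t \<in> T \<and> t \<in> H #> x"
      by (rule T_unique)
  qed
qed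

theorem inv_closed_transversal_if_involution_in_normalizing_cosets:
  assumes fin: "finite (carrier G)" and pow: "card H = 2 ^ k"
    and invol: "involution_in_normalizing_cosets G H"
  shows "\<exists>T. inv_closed_transversal_on G H (carrier G) T"
proof -
  define U where "U g = double_coset G H g \<union> double_coset G H (inv g)" for g
  have "pairwise disjnt (U ` carrier G)"
    unfolding pairwise_def disjnt_def U_def using double_coset_Un_inv_eq by blast
  moreover have "H #> x \<subseteq> V" if "V \<in> U ` carrier G" "x \<in> V" for V x
    using that rcos_subset_double_coset inv_closed unfolding U_def by blast
  moreover have "\<exists>T. inv_closed_transversal_on G H V T" if "V \<in> U ` carrier G" for V
    using that inv_closed_transversal_on_double_cosets[OF fin pow invol] unfolding U_def by blast
  ultimately have "\<exists>T. inv_closed_transversal_on G H (\<Union>(U ` carrier G)) T"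
    by (rule inv_closed_transversal_on_Union)
  moreover have "\<Union>(U ` carrier G) = carrier G"
    unfolding U_def using double_coset_subset double_coset_self by blast
  ultimately show ?thesis
    by simp
qed

section \<open>Subgroups of index two\<close>

lemma subgroup_Un_rcos:
  assumes y: "y \<in> carrier G" and normal: "H #> y = y <# H" and sq: "y \<otimes> y \<in> H"
  shows "subgroup (H \<union> (H #> y)) G"
proof -
  let ?K = "H \<union> (H #> y)"
  have mem_K: "z \<in> ?K \<longleftrightarrow> z \<in> H \<or> z \<in> carrier G \<and> z \<otimes> inv y \<in> H" for z
    using rcos_iff[OF y] by blast
  have conj: "y \<otimes> h \<otimes> inv y \<in> H" if "h \<in> H" for h
    using normalizing_conj_closed(1)[OF y normal that] .
  show ?thesis
  proof (rule subgroupI)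
    show "?K \<subseteq> carrier G"
      using r_coset_subset_G[OF H.subset y] H.subset by blast
    show "?K \<noteq> {}"
      using H.one_closed by blast
  next
    fix a assume a: "a \<in> ?K"
    show "inv a \<in> ?K"
    proof (cases "a \<in> H")
      case False
      then have ac: "a \<in> carrier G" and ha: "a \<otimes> inv y \<in> H"
        using a mem_K by auto
      have "y \<otimes> a = (y \<otimes> (a \<otimes> inv y) \<otimes> inv y) \<otimes> (y \<otimes> y)"
        using ac y by (simp add: m_assoc)
      also have "\<dots> \<in> H"
        by (intro H.m_closed conj ha sq)
      finally have "inv (y \<otimes> a) \<in> H"
        by (rule H.m_inv_closed)
      then show ?thesis
        unfolding mem_K using ac y by (simp add: inv_mult_group)
    qed (use H.m_inv_closed in blast)
  next
    fix a b assume a: "a \<in> ?K" and b: "b \<in> ?K"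
    have ac: "a \<in> carrier G" and bc: "b \<in> carrier G"
      using a b mem_K by auto
    consider "a \<in> H" "b \<in> H" | "a \<in> H" "b \<otimes> inv y \<in> H" | "a \<otimes> inv y \<in> H" "b \<in> H"
      | "a \<otimes> inv y \<in> H" "b \<otimes> inv y \<in> H"
      using a b mem_K by blast
    then show "a \<otimes> b \<in> ?K"
    proof cases
      case 1
      then show ?thesis
        by simp
    next
      case 2
      have "a \<otimes> b \<otimes> inv y = a \<otimes> (b \<otimes> inv y)"
        using ac bc y by (simp add: m_assoc)
      also have "\<dots> \<in> H"
        by (intro H.m_closed 2)
      finally show ?thesis
        unfolding mem_K using ac bc by simp
    next
      case 3
      have "a \<otimes> b \<otimes> inv y = (a \<otimes> inv y) \<otimes> (y \<otimes> b \<otimes> inv y)"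
        using ac bc y by (simp add: m_assoc)
      also have "\<dots> \<in> H"
        by (intro H.m_closed conj 3)
      finally show ?thesis
        unfolding mem_K using ac bc by simp
    next
      case 4
      have "a \<otimes> b = (a \<otimes> inv y) \<otimes> (y \<otimes> (b \<otimes> inv y) \<otimes> inv y) \<otimes> (y \<otimes> y)"
        using ac bc y by (simp add: m_assoc)
      also have "\<dots> \<in> H"
        by (intro H.m_closed conj 4 sq)
      finally show ?thesis
        by simp
    qed
  qed
qed

lemma card_Un_rcos:
  assumes fin: "finite (carrier G)" and y: "y \<in> carrier G" "y \<notin> H"
  shows "card (H \<union> (H #> y)) = 2 * card H"
proof -
  have "H \<inter> (H #> y) = {}"
  proof (rule ccontr)
    assume "H \<inter> (H #> y) \<noteq> {}"
    then obtain z where z: "z \<in> H" "z \<otimes> inv y \<in> H"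
      using rcos_iff[OF y(1)] by blast
    then have "inv (inv z \<otimes> (z \<otimes> inv y)) \<in> H"
      by simp
    then show False
      using z y by simp
  qed
  moreover have "card (H #> y) = card H"
    using card_rcosets_equal[OF rcosetsI[OF H.subset y(1)] H.subset] by simp
  moreover have "card (H \<union> (H #> y)) = card H + card (H #> y)"
    using card_Un_disjoint[OF finite_subset[OF H.subset fin]
        finite_subset[OF r_coset_subset_G[OF H.subset y(1)] fin]] calculation(1) by blast
  ultimately show ?thesis
    by simp
qed

lemma card_Diff_index_two:
  assumes fin: "finite (carrier G)" and K: "subgroup K G" "H \<subseteq> K" "card K = 2 * card H"
  shows "finite (K - H)" "card (K - H) = card H"
proof -
  have finK: "finite K"
    using finite_subset[OF subgroup.subset[OF K(1)] fin] .
  then show "finite (K - H)"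
    by simp
  show "card (K - H) = card H"
    using card_Diff_subset[OF finite_subset[OF K(2) finK] K(2)] K(3) by simp
qed

lemma index_two_rcos_eq:
  assumes fin: "finite (carrier G)"
    and K: "subgroup K G" "H \<subseteq> K" "card K = 2 * card H" and y: "y \<in> K" "y \<notin> H"
  shows "H #> y = K - H"
proof -
  have yc: "y \<in> carrier G"
    using y(1) subgroup.subset[OF K(1)] by blast
  have "H #> y \<subseteq> K - H"
  proof
    fix z assume "z \<in> H #> y"
    then obtain h where h: "h \<in> H" "z = h \<otimes> y"
      unfolding r_coset_def by blast
    then have "z \<in> K"
      using K(2) y(1) subgroup.m_closed[OF K(1)] by blast
    moreover have "z \<notin> H"
    proof
      assume "z \<in> H"
      then have "inv h \<otimes> z \<in> H"
        using h by simp
      then show False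
        using h y yc by (simp add: m_assoc [symmetric])
    qed
    ultimately show "z \<in> K - H"
      by blast
  qed
  moreover have "card (H #> y) = card H"
    using card_rcosets_equal[OF rcosetsI[OF H.subset yc] H.subset] by simp
  ultimately show ?thesis
    using card_subset_eq card_Diff_index_two[OF fin K] by metis
qed

lemma index_two_lcos_eq:
  assumes fin: "finite (carrier G)"
    and K: "subgroup K G" "H \<subseteq> K" "card K = 2 * card H" and y: "y \<in> K" "y \<notin> H"
  shows "y <# H = K - H"
proof -
  have yc: "y \<in> carrier G"
    using y(1) subgroup.subset[OF K(1)] by blast
  have "y <# H \<subseteq> K - H"
  proof
    fix z assume "z \<in> y <# H"
    then obtain h where h: "h \<in> H" "z = y \<otimes> h"
      unfolding l_coset_def by blast
    then have "z \<in> K"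
      using K(2) y(1) subgroup.m_closed[OF K(1)] by blast
    moreover have "z \<notin> H"
    proof
      assume "z \<in> H"
      then have "z \<otimes> inv h \<in> H"
        using h by simp
      then show False
        using h y yc by (simp add: m_assoc)
    qed
    ultimately show "z \<in> K - H"
      by blast
  qed
  moreover have "y <# H \<in> lcosets H"
    unfolding LCOSETS_def using yc by blast
  then have "card (y <# H) = card H"
    using l_card_cosets_equal[OF _ H.subset fin] by simp
  ultimately show ?thesis
    using card_subset_eq card_Diff_index_two[OF fin K] by metis
qed

lemma square_mem_of_index_two:
  assumes fin: "finite (carrier G)"
    and K: "subgroup K G" "H \<subseteq> K" "card K = 2 * card H" and z: "z \<in> K"
  shows "z \<otimes> z \<in> H"
proof (rule ccontr)
  assume zz: "z \<otimes> z \<notin> H"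
  then have "z \<notin> H"
    by auto
  moreover have "z \<otimes> z \<in> K"
    using subgroup.m_closed[OF K(1) z z] .
  ultimately have "z \<otimes> z \<in> H #> z"
    using index_two_rcos_eq[OF fin K z] zz by simp
  moreover have "z \<in> carrier G"
    using z subgroup.subset[OF K(1)] by blast
  ultimately have "z \<otimes> z \<otimes> inv z \<in> H"
    using rcos_iff by blast
  then show False
    using \<open>z \<notin> H\<close> \<open>z \<in> carrier G\<close> by (simp add: m_assoc)
qed

lemma mem_Un_rcos_powers:
  assumes H_eq: "H = range (\<lambda>i::int. a [^] i)" and y: "y \<in> carrier G" and z: "z \<in> H \<union> (H #> y)"
  shows "\<exists>i::int. z = a [^] i \<or> z = a [^] i \<otimes> y"
proof (cases "z \<in> H")
  case False
  then have zc: "z \<in> carrier G" and "z \<otimes> inv y \<in> H"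
    using z rcos_iff[OF y] by auto
  then obtain i :: int where i: "z \<otimes> inv y = a [^] i"
    using H_eq by blast
  have "a [^] i \<in> carrier G"
    using H_eq H.subset by blast
  then have "z = a [^] i \<otimes> y"
    using i zc y by (metis inv_solve_right')
  then show ?thesis
    by blast
qed (use H_eq in blast)

lemma rcos_eq_lcos_if_conj_inv:
  assumes H_eq: "H = range (\<lambda>i::int. a [^] i)" and a: "a \<in> carrier G" and y: "y \<in> carrier G"
    and conj: "inv y \<otimes> a \<otimes> y = inv a"
  shows "H #> y = y <# H"
proof
  show "H #> y \<subseteq> y <# H"
  proof
    fix z assume "z \<in> H #> y"
    then obtain i :: int where "z = a [^] i \<otimes> y"
      unfolding r_coset_def H_eq by blast
    then have "z = y \<otimes> a [^] (- i)"
      using inv_conj_swap[OF a y conj, of "- i"] by simp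
    then show "z \<in> y <# H"
      unfolding l_coset_def H_eq by blast
  qed
  show "y <# H \<subseteq> H #> y"
  proof
    fix z assume "z \<in> y <# H"
    then obtain i :: int where "z = y \<otimes> a [^] i"
      unfolding l_coset_def H_eq by blast
    then have "z = a [^] (- i) \<otimes> y"
      using inv_conj_swap[OF a y conj] by simp
    then show "z \<in> H #> y"
      unfolding r_coset_def H_eq by blast
  qed
qed

lemma cyclic_generator:
  assumes "cyclic_group (subgroup_generated G H)"
  obtains a where "a \<in> H" "H = range (\<lambda>i::int. a [^] i)"
proof -
  obtain a where "a \<in> carrier (subgroup_generated G H)"
    "carrier (subgroup_generated G H) = range (\<lambda>i::int. a [^]\<^bsub>subgroup_generated G H\<^esub> i)"
    using assms group.cyclic_group[OF group_subgroup_generated] by blast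
  then show ?thesis
    using that int_pow_subgroup_generated by simp
qed

lemma ord_generator:
  assumes a: "a \<in> carrier G" and H_eq: "H = range (\<lambda>i::int. a [^] i)"
  shows "ord a = card H"
proof -
  have "generate G {a} = H"
    using generate_pow[OF a] H_eq by auto
  then show ?thesis
    using generate_pow_card[OF a] by simp
qed

end

section \<open>Involutions in cyclic and generalised quaternion groups\<close>

lemma (in group) int_pow_involution_is_square:
  assumes x: "x \<in> carrier G" and four: "4 dvd ord x"
    and inv: "x [^] (i::int) \<otimes> x [^] i = \<one>"
  shows "\<exists>z\<in>carrier G. x [^] i = z \<otimes> z"
proof -
  have "x [^] (i + i) = \<one>"
    using inv by (simp only: int_pow_mult[OF x])
  then have "int (ord x) dvd i + i"
    using int_pow_eq_id[OF x] by blast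
  moreover have "(4::int) dvd int (ord x)"
    using four by presburger
  ultimately have "(4::int) dvd i + i"
    using dvd_trans by blast
  then have "2 dvd i"
    by presburger
  then obtain m where "i = m + m"
    by (metis evenE mult_2)
  then have "x [^] i = x [^] m \<otimes> x [^] m"
    by (simp only: int_pow_mult[OF x])
  then show ?thesis
    using x by blast
qed

lemma (in group) cyclic_involution_is_square:
  assumes cyc: "cyclic_group G" and four: "4 dvd order G"
    and t: "t \<in> carrier G" "t \<otimes> t = \<one>"
  shows "\<exists>z\<in>carrier G. t = z \<otimes> z"
proof -
  obtain a where a: "a \<in> carrier G" "carrier G = range (\<lambda>n::int. a [^] n)"
    using cyc cyclic_group by blast
  have "generate G {a} = carrier G"
    using generate_pow[OF a(1)] a(2) by auto
  then have "ord a = order G"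
    using generate_pow_card[OF a(1)] unfolding order_def by simp
  moreover obtain i :: int where "t = a [^] i"
    using t(1) a(2) by blast
  ultimately show ?thesis
    using int_pow_involution_is_square[OF a(1)] four t(2) by simp
qed

lemma (in group) gen_quaternion_group_normal_form:
  assumes "gen_quaternion_group G"
  obtains n x y where "n \<ge> 3" "x \<in> carrier G" "y \<in> carrier G" "ord x = 2 ^ (n - 1)"
    "y \<otimes> y = x [^] int (2 ^ (n - 2))" "inv y \<otimes> x \<otimes> y = inv x"
    "carrier G = range (\<lambda>i::int. x [^] i) \<union> (range (\<lambda>i::int. x [^] i) #> y)"
proof -
  obtain n x y where n: "n \<ge> 3" "finite (carrier G)" "card (carrier G) = 2 ^ n"
    and xy: "x \<in> carrier G" "y \<in> carrier G" "generate G {x, y} = carrier G"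
    and x_pow: "x [^] ((2::nat) ^ (n - 1)) = \<one>"
    and y_sq: "y [^] (2::nat) = x [^] ((2::nat) ^ (n - 2))"
    and conj: "inv y \<otimes> x \<otimes> y = inv x"
    using assms unfolding gen_quaternion_group_def by blast
  define P where "P = range (\<lambda>i::int. x [^] i)"
  have P_gen: "generate G {x} = P"
    unfolding P_def using generate_pow[OF xy(1)] by auto
  interpret P: group_subgroup G P
    using generate_is_subgroup[of "{x}"] xy(1) is_group P_gen
    unfolding group_subgroup_def group_subgroup_axioms_def by simp
  have "y [^] (2::nat) = y \<otimes> y"
    using xy(2) by (simp add: numeral_2_eq_2)
  then have y_sq': "y \<otimes> y = x [^] int (2 ^ (n - 2))"
    using y_sq int_pow_int[of G x "2 ^ (n - 2)"] by simp
  then have "y \<otimes> y \<in> P"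
    unfolding P_def by blast
  then have "subgroup (P \<union> (P #> y)) G"
    using P.subgroup_Un_rcos[OF xy(2)] P.rcos_eq_lcos_if_conj_inv[OF P_def xy(1,2) conj] by blast
  moreover have "{x, y} \<subseteq> P \<union> (P #> y)"
    using rcos_self[OF xy(2) P.subgroup_H] generate.incl[of x "{x}" G] P_gen by blast
  ultimately have G_eq: "carrier G = P \<union> (P #> y)"
    using generate_subgroup_incl xy(3) P.H.subset r_coset_subset_G[OF P.H.subset xy(2)] by blast
  have "ord x = 2 ^ (n - 1)"
  proof (rule antisym)
    show "ord x \<le> 2 ^ (n - 1)"
      using x_pow pow_eq_id[OF xy(1)] by (simp add: dvd_imp_le)
    have "card (P #> y) = card P"
      using card_rcosets_equal[OF rcosetsI[OF P.H.subset xy(2)] P.H.subset] by simp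
    moreover have "2 ^ n \<le> card P + card (P #> y)"
      using n(3) G_eq card_Un_le by metis
    moreover have "(2::nat) ^ n = 2 * 2 ^ (n - 1)"
      using n(1) by (metis Suc_diff_1 less_le_trans numeral_3_eq_3 power_Suc zero_less_Suc)
    ultimately show "2 ^ (n - 1) \<le> ord x"
      using P.ord_generator[OF xy(1) P_def] by simp
  qed
  then show ?thesis
    using that n(1) xy(1,2) y_sq' conj G_eq unfolding P_def by blast
qed

text \<open>An involution \<open>x^i y\<close> would give \<open>1 = (x^i y)^2 = y^2\<close>, which has order 2. So every
  involution is a power of \<open>x\<close>, and the order of \<open>x\<close> is divisible by 4.\<close>
lemma (in group) gen_quaternion_involution_is_square:
  assumes quat: "gen_quaternion_group G" and t: "t \<in> carrier G" "t \<otimes> t = \<one>"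
  shows "\<exists>z\<in>carrier G. t = z \<otimes> z"
proof -
  obtain n x y where n: "n \<ge> 3" and xy: "x \<in> carrier G" "y \<in> carrier G"
    and ord_x: "ord x = 2 ^ (n - 1)" and y_sq: "y \<otimes> y = x [^] int (2 ^ (n - 2))"
    and conj: "inv y \<otimes> x \<otimes> y = inv x"
    and G_eq: "carrier G = range (\<lambda>i::int. x [^] i) \<union> (range (\<lambda>i::int. x [^] i) #> y)"
    using gen_quaternion_group_normal_form[OF quat] by metis
  consider i :: int where "t = x [^] i" | i :: int where "t = x [^] i \<otimes> y"
    using t(1) unfolding G_eq r_coset_def by blast
  then show ?thesis
  proof cases
    case 1
    have "(2::nat) ^ 2 dvd 2 ^ (n - 1)"
      using n by (intro le_imp_power_dvd) simp
    then have "4 dvd ord x"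
      unfolding ord_x by simp
    then show ?thesis
      using int_pow_involution_is_square[OF xy(1)] t(2) 1 by simp
  next
    case 2
    have "t \<otimes> t = x [^] i \<otimes> (y \<otimes> x [^] i) \<otimes> y"
      using 2 xy by (simp add: m_assoc)
    also have "\<dots> = y \<otimes> y"
      using xy inv_conj_swap[OF xy conj, of i] by (simp add: m_assoc int_pow_neg)
    finally have "x [^] int (2 ^ (n - 2)) = \<one>"
      using t(2) y_sq by simp
    then have "2 ^ (n - 1) dvd (2::nat) ^ (n - 2)"
      using int_pow_eq_id[OF xy(1)] ord_x by (simp del: of_nat_power add: of_nat_dvd_iff)
    then show ?thesis
      using n power_dvd_imp_le[of 2 "n - 1" "n - 2"] by simp
  qed
qed

lemma (in group) cyclic_subgroup_generated_if_subset_generate: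
  assumes K: "subgroup K G" and y: "y \<in> K" and sub: "K \<subseteq> generate G {y}"
  shows "cyclic_group (subgroup_generated G K)"
proof -
  have "generate G {y} \<subseteq> K"
    using generate_subgroup_incl[OF _ K] y by blast
  then have "carrier (subgroup_generated G K) = carrier (subgroup_generated G {y})"
    using sub y subgroup.subset[OF K] subgroup.carrier_subgroup_generated_subgroup[OF K]
    by (auto simp: carrier_subgroup_generated)
  then have "subgroup_generated G K = subgroup_generated G {y}"
    by (metis subgroup_generated_eq_carrier_update)
  then show ?thesis
    using cyclic_group_generated by simp
qed

lemma (in group) gen_quaternion_group_subgroup_generated:
  assumes K: "subgroup K G" "finite K" "card K = 2 ^ n" "n \<ge> 3"
    and xy: "x \<in> K" "y \<in> K" "generate G {x, y} = K"
    and rel: "x [^] ((2::nat) ^ (n - 1)) = \<one>" "y [^] (2::nat) = x [^] ((2::nat) ^ (n - 2))"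
      "inv y \<otimes> x \<otimes> y = inv x"
  shows "gen_quaternion_group (subgroup_generated G K)"
proof -
  let ?Q = "subgroup_generated G K"
  have carQ: "carrier ?Q = K"
    by (rule subgroup.carrier_subgroup_generated_subgroup[OF K(1)])
  then have "?Q = G\<lparr>carrier := K\<rparr>"
    by (metis subgroup_generated_eq_carrier_update)
  then have "generate ?Q {x, y} = carrier ?Q"
    using generate_consistent[of "{x, y}" K] xy K(1) carQ by simp
  moreover have "x \<in> carrier ?Q" "y \<in> carrier ?Q"
    using xy carQ by simp_all
  ultimately show ?thesis
    unfolding gen_quaternion_group_def using K rel carQ
    by (intro conjI group_subgroup_generated exI[of _ n] bexI[of _ x] bexI[of _ y])
      (simp_all add: pow_subgroup_generated)
qed

lemma linear_congruence_solvable: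
  fixes a b n :: int
  assumes "gcd a n dvd b"
  shows "\<exists>i. n dvd a * i + b"
proof -
  obtain c where c: "b = gcd a n * c"
    using assms by blast
  obtain u v where uv: "u * a + v * n = gcd a n"
    using bezout_int[of a n] by blast
  have "a * (- (u * c)) + b = n * (v * c)"
    unfolding c uv[symmetric] by (simp add: algebra_simps)
  then show ?thesis
    by (metis dvd_triv_left)
qed

lemma two_power_dvd_diff_half:
  fixes s :: int
  assumes k: "k \<ge> 1" and half: "2 ^ (k - 1) dvd s" and not_dvd: "\<not> 2 ^ k dvd s"
  shows "2 ^ k dvd s - 2 ^ (k - 1)"
proof -
  have split: "(2::int) ^ k = 2 * 2 ^ (k - 1)"
    using k by (metis Suc_diff_1 less_le_trans power_Suc zero_less_one)
  obtain c where c: "s = 2 ^ (k - 1) * c"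
    using half by blast
  then have "odd c"
    using not_dvd unfolding split by (auto elim!: evenE)
  then obtain e where "c = 2 * e + 1"
    by (rule oddE)
  then have "s - 2 ^ (k - 1) = 2 ^ k * e"
    unfolding c split by (simp add: algebra_simps)
  then show ?thesis
    by simp
qed

lemma unsolvable_congruence_mod_two_power:
  fixes r s :: int and k :: nat
  assumes k: "k \<ge> 1"
    and no_sol: "\<And>i. \<not> 2 ^ k dvd (1 + r) * i + s"
    and comm: "2 ^ k dvd (r - 1) * s"
  shows "odd s \<or> k \<ge> 2 \<and> 2 ^ k dvd 1 + r \<and> 2 ^ k dvd s - 2 ^ (k - 1)"
proof (cases "odd s")
  case False
  define N where "N = (2::int) ^ k"
  define d where "d = gcd (1 + r) N"
  have N_split: "N = 2 * 2 ^ (k - 1)"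
    unfolding N_def using k by (metis Suc_diff_1 less_le_trans power_Suc zero_less_one)
  have d_not_dvd: "\<not> d dvd s"
    using linear_congruence_solvable[of "1 + r" N s] no_sol unfolding d_def N_def by blast
  have "d dvd 2 ^ k"
    unfolding d_def N_def by simp
  moreover have "normalization_semidom_class.prime (2::int)"
    by simp
  ultimately obtain m where "m \<le> k" "normalize d = 2 ^ m"
    using divides_primepow by blast
  then have m: "m \<le> k" "d = 2 ^ m"
    unfolding d_def by simp_all
  have "m \<ge> 2"
  proof (rule ccontr)
    assume "\<not> m \<ge> 2"
    then have "d dvd 2"
      using m(2) by (cases m) auto
    then show False
      using d_not_dvd False dvd_trans by blast
  qed
  then have "(2::int) ^ 2 dvd d"
    unfolding m(2) by (rule le_imp_power_dvd)
  moreover have d_dvd: "d dvd 1 + r"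
    unfolding d_def by simp
  ultimately obtain q where q: "1 + r = 4 * q"
    using dvd_trans by fastforce
  have r_eq: "r = 4 * q - 1"
    using q by linarith
  have "(r - 1) * s = (2 * q - 1) * (2 * s)"
    by (subst r_eq) (simp add: algebra_simps)
  moreover have "coprime N (2 * q - 1)"
    unfolding N_def using k by simp
  ultimately have "N dvd 2 * s"
    using comm coprime_dvd_mult_right_iff unfolding N_def by metis
  then have half_dvd: "2 ^ (k - 1) dvd s"
    unfolding N_split by simp
  have "m = k"
  proof (rule ccontr)
    assume "m \<noteq> k"
    then have "m \<le> k - 1"
      using m(1) by simp
    then have "d dvd 2 ^ (k - 1)"
      unfolding m(2) by (rule le_imp_power_dvd)
    then show False
      using d_not_dvd half_dvd dvd_trans by blast
  qed
  have "\<not> 2 ^ k dvd s"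
    using no_sol[of 0] by simp
  then have "2 ^ k dvd s - 2 ^ (k - 1)"
    by (rule two_power_dvd_diff_half[OF k half_dvd])
  then show ?thesis
    using \<open>m \<ge> 2\<close> \<open>m = k\<close> m(2) d_dvd by simp
qed simp

context group_subgroup
begin

lemma involution_mem_of_index_two:
  assumes fin: "finite (carrier G)"
    and K: "subgroup K G" "H \<subseteq> K" "card K = 2 * card H" and even: "even (card H)"
    and K_type: "cyclic_group (subgroup_generated G K) \<or> gen_quaternion_group (subgroup_generated G K)"
    and t: "t \<in> K" "t \<otimes> t = \<one>"
  shows "t \<in> H"
proof -
  let ?Q = "subgroup_generated G K"
  have carQ: "carrier ?Q = K"
    by (rule subgroup.carrier_subgroup_generated_subgroup[OF K(1)])
  interpret Q: group ?Q
    by simp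
  have "4 dvd order ?Q"
    unfolding order_def carQ K(3) using even by auto
  then have "\<exists>z\<in>carrier ?Q. t = z \<otimes>\<^bsub>?Q\<^esub> z"
    using K_type Q.cyclic_involution_is_square Q.gen_quaternion_involution_is_square t carQ by auto
  then obtain z where "z \<in> K" "t = z \<otimes> z"
    using carQ by auto
  then show ?thesis
    using square_mem_of_index_two[OF fin K] by simp
qed

lemma cyclic_Un_rcos_if_odd:
  assumes H_eq: "H = range (\<lambda>i::int. a [^] i)" and a: "a \<in> carrier G" and ord_a: "ord a = 2 ^ k"
    and y: "y \<in> carrier G" and normal: "H #> y = y <# H"
    and s: "y \<otimes> y = a [^] (s::int)" and odd: "odd s"
  shows "cyclic_group (subgroup_generated G (H \<union> (H #> y)))"
proof -
  have "coprime s (2 ^ k)"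
    using odd by simp
  then obtain u v :: int where "u * s + v * 2 ^ k = 1"
    using bezout_int[of s "2 ^ k"] by auto
  then have "u * s - 1 = - (v * 2 ^ k)"
    by linarith
  then have "a = a [^] (u * s)"
    using int_pow_eq[OF a, of 1 "u * s"] ord_a a by simp
  also have "\<dots> = (y \<otimes> y) [^] u"
    using s int_pow_pow[OF a] by (simp add: mult.commute)
  finally have a_eq: "a = (y \<otimes> y) [^] u" .
  have sub_y: "subgroup (generate G {y}) G"
    using generate_is_subgroup y by simp
  have y_gen: "y \<in> generate G {y}"
    by (rule generate.incl) simp
  have "a \<in> generate G {y}"
    unfolding a_eq by (intro subgroup_int_pow_closed[OF sub_y] subgroup.m_closed[OF sub_y] y_gen)
  then have "a [^] i \<in> generate G {y}" "a [^] i \<otimes> y \<in> generate G {y}" for i :: int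
    using subgroup_int_pow_closed[OF sub_y] subgroup.m_closed[OF sub_y] y_gen by blast+
  then have "H \<union> (H #> y) \<subseteq> generate G {y}"
    using mem_Un_rcos_powers[OF H_eq y] by blast
  moreover have "subgroup (H \<union> (H #> y)) G"
    using subgroup_Un_rcos[OF y normal] s H_eq by blast
  moreover have "y \<in> H \<union> (H #> y)"
    using rcos_self[OF y subgroup_H] by blast
  ultimately show ?thesis
    using cyclic_subgroup_generated_if_subset_generate by blast
qed

lemma gen_quaternion_Un_rcos:
  assumes fin: "finite (carrier G)"
    and H_eq: "H = range (\<lambda>i::int. a [^] i)" and a: "a \<in> carrier G" and ord_a: "ord a = 2 ^ k"
    and k: "k \<ge> 2" and y: "y \<in> carrier G" "y \<notin> H"
    and conj: "inv y \<otimes> a \<otimes> y = inv a" and s: "y \<otimes> y = a [^] ((2::int) ^ (k - 1))"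
  shows "gen_quaternion_group (subgroup_generated G (H \<union> (H #> y)))"
proof -
  let ?K = "H \<union> (H #> y)"
  have K: "subgroup ?K G"
    using subgroup_Un_rcos[OF y(1) rcos_eq_lcos_if_conj_inv[OF H_eq a y(1) conj]] s H_eq by blast
  have "a [^] (1::int) \<in> H"
    unfolding H_eq by blast
  then have aK: "a \<in> ?K"
    using a by simp
  have yK: "y \<in> ?K"
    using rcos_self[OF y(1) subgroup_H] by blast
  have sub_ay: "subgroup (generate G {a, y}) G"
    using generate_is_subgroup a y(1) by simp
  have a_gen: "a \<in> generate G {a, y}" and y_gen: "y \<in> generate G {a, y}"
    by (auto intro: generate.incl)
  have gen: "generate G {a, y} = ?K"
  proof
    show "generate G {a, y} \<subseteq> ?K"
      using generate_subgroup_incl[OF _ K] aK yK by simp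
    have "a [^] i \<in> generate G {a, y}" "a [^] i \<otimes> y \<in> generate G {a, y}" for i :: int
      using subgroup_int_pow_closed[OF sub_ay a_gen] subgroup.m_closed[OF sub_ay _ y_gen] by blast+
    then show "?K \<subseteq> generate G {a, y}"
      using mem_Un_rcos_powers[OF H_eq y(1)] by blast
  qed
  have a_pow: "a [^] ((2::nat) ^ (k + 1 - 1)) = \<one>"
    using pow_ord_eq_1[OF a] ord_a by simp
  have "y [^] (2::nat) = a [^] ((2::nat) ^ (k + 1 - 2))"
    using s int_pow_int[of G a "2 ^ (k - 1)"] y(1) by (simp add: numeral_2_eq_2)
  moreover have "finite ?K" "card ?K = 2 ^ (k + 1)" "k + 1 \<ge> 3"
    using finite_subset[OF subgroup.subset[OF K] fin] card_Un_rcos[OF fin y] ord_generator[OF a H_eq]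
      ord_a k by simp_all
  ultimately show ?thesis
    using gen_quaternion_group_subgroup_generated[OF K _ _ _ aK yK gen a_pow _ conj] by blast
qed

text \<open>With \<open>H = \<langle>a\<rangle>\<close>, \<open>y\<inverse> a y = a^r\<close> and \<open>y^2 = a^s\<close> one has \<open>(a^i y)^2 = a^((1 + r) i + s)\<close>,
  so \<open>H y\<close> contains no involution iff \<open>(1 + r) i + s \<equiv> 0 (mod 2^k)\<close> has no solution. Then either
  \<open>s\<close> is odd and \<open>a\<close> is a power of \<open>y\<close>, or \<open>r \<equiv> -1\<close> and \<open>s \<equiv> 2^(k-1)\<close>, the quaternion relations.\<close>
lemma cyclic_or_gen_quaternion_if_no_involution:
  assumes fin: "finite (carrier G)" and cyc: "cyclic_group (subgroup_generated G H)"
    and pow: "card H = 2 ^ k" and k: "k \<ge> 1"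
    and y: "y \<in> carrier G" "y \<notin> H" and normal: "H #> y = y <# H" and sq: "y \<otimes> y \<in> H"
    and no_inv: "\<And>t. t \<in> H #> y \<Longrightarrow> t \<otimes> t \<noteq> \<one>"
  shows "cyclic_group (subgroup_generated G (H \<union> (H #> y))) \<or>
    gen_quaternion_group (subgroup_generated G (H \<union> (H #> y)))"
proof -
  obtain a where a: "a \<in> H" and H_eq: "H = range (\<lambda>i::int. a [^] i)"
    using cyclic_generator[OF cyc] by blast
  have ac: "a \<in> carrier G"
    using a by simp
  have ord_a: "ord a = 2 ^ k"
    using ord_generator[OF ac H_eq] pow by simp
  have pow_eq: "a [^] i = a [^] j \<longleftrightarrow> 2 ^ k dvd j - i" for i j :: int
    using int_pow_eq[OF ac] ord_a by simp
  obtain r :: int where r: "inv y \<otimes> a \<otimes> y = a [^] r"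
    using normalizing_conj_closed(2)[OF y(1) normal a] H_eq by blast
  obtain s :: int where s: "y \<otimes> y = a [^] s"
    using sq H_eq by blast
  have no_sol: "\<not> 2 ^ k dvd (1 + r) * i + s" for i :: int
  proof
    assume "2 ^ k dvd (1 + r) * i + s"
    then have "(a [^] i \<otimes> y) \<otimes> (a [^] i \<otimes> y) = \<one>"
      unfolding square_int_pow_mult_eq[OF ac y(1) r s] using int_pow_eq_id[OF ac] ord_a by simp
    moreover have "a [^] i \<otimes> y \<in> H #> y"
      using H_eq rcos_iff[OF y(1)] ac y(1) by (simp add: m_assoc)
    ultimately show False
      using no_inv by blast
  qed
  have "inv y \<otimes> (y \<otimes> y) \<otimes> y = y \<otimes> y"
    using y(1) by (simp add: m_assoc)
  then have "a [^] (r * s) = a [^] s"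
    using conj_int_pow[OF ac y(1), of s] r s int_pow_pow[OF ac] by simp
  then have comm: "2 ^ k dvd (r - 1) * s"
    unfolding pow_eq by (simp add: algebra_simps dvd_diff_commute)
  consider "odd s" | "k \<ge> 2" "2 ^ k dvd 1 + r" "2 ^ k dvd s - 2 ^ (k - 1)"
    using unsolvable_congruence_mod_two_power[OF k no_sol comm] by blast
  then show ?thesis
  proof cases
    case 1
    then show ?thesis
      using cyclic_Un_rcos_if_odd[OF H_eq ac ord_a y(1) normal s] by blast
  next
    case 2
    have minus_eq: "- 1 - r = - (1 + r)"
      by simp
    have "2 ^ k dvd - 1 - r"
      unfolding minus_eq using 2(2) by (simp only: dvd_minus_iff)
    then have "inv y \<otimes> a \<otimes> y = inv a"
      using r pow_eq[of r "- 1"] int_pow_neg[OF ac, of 1] ac by simp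
    moreover have "y \<otimes> y = a [^] ((2::int) ^ (k - 1))"
      using s 2(3) pow_eq by (simp add: dvd_diff_commute)
    ultimately show ?thesis
      using gen_quaternion_Un_rcos[OF fin H_eq ac ord_a 2(1) y] by blast
  qed
qed

lemma no_cyclic_or_gen_quaternion_overgroup:
  assumes fin: "finite (carrier G)" and pow: "card H = 2 ^ k" and k: "k \<ge> 1"
    and invol: "involution_in_normalizing_cosets G H"
    and K: "subgroup K G" "H \<subseteq> K" "card K = 2 * card H"
  shows "\<not> (cyclic_group (subgroup_generated G K) \<or> gen_quaternion_group (subgroup_generated G K))"
proof
  assume K_type: "cyclic_group (subgroup_generated G K) \<or> gen_quaternion_group (subgroup_generated G K)"
  have "card H < card K"
    using K(3) H.finite_imp_card_positive[OF fin] by simp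
  moreover have "card K \<le> card H" if "K \<subseteq> H"
    using card_mono[OF finite_subset[OF H.subset fin] that] .
  ultimately obtain y where y: "y \<in> K" "y \<notin> H"
    by fastforce
  have "y \<in> carrier G"
    using y(1) subgroup.subset[OF K(1)] by blast
  moreover have "H #> y = y <# H"
    using index_two_rcos_eq[OF fin K y] index_two_lcos_eq[OF fin K y] by simp
  moreover have "y \<otimes> y \<in> H"
    using square_mem_of_index_two[OF fin K y(1)] .
  ultimately obtain t where t: "t \<in> H #> y" "t \<otimes> t = \<one>"
    using invol unfolding involution_in_normalizing_cosets_def by blast
  have "even (card H)"
    using pow k by (simp add: dvd_power)
  moreover have "t \<in> K - H"
    using t(1) index_two_rcos_eq[OF fin K y] by simp
  ultimately show False
    using involution_mem_of_index_two[OF fin K _ K_type _ t(2)] by blast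
qed

lemma involution_in_normalizing_cosets_if_no_overgroup:
  assumes fin: "finite (carrier G)" and cyc: "cyclic_group (subgroup_generated G H)"
    and pow: "card H = 2 ^ k" and k: "k \<ge> 1"
    and no_K: "\<not> (\<exists>K. subgroup K G \<and> H \<subseteq> K \<and> card K = 2 * card H \<and>
          (cyclic_group (subgroup_generated G K) \<or> gen_quaternion_group (subgroup_generated G K)))"
  shows "involution_in_normalizing_cosets G H"
  unfolding involution_in_normalizing_cosets_def
proof (intro ballI impI)
  fix y assume y: "y \<in> carrier G" and "H #> y = y <# H \<and> y \<otimes> y \<in> H"
  then have normal: "H #> y = y <# H" and sq: "y \<otimes> y \<in> H"
    by auto
  show "\<exists>t\<in>H #> y. t \<otimes> t = \<one>"
  proof (cases "y \<in> H")
    case True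
    then have "\<one> \<in> H #> y"
      using rcos_iff[OF y] y by simp
    then show ?thesis
      by force
  next
    case False
    show ?thesis
    proof (rule ccontr)
      assume "\<not> (\<exists>t\<in>H #> y. t \<otimes> t = \<one>)"
      then have "cyclic_group (subgroup_generated G (H \<union> (H #> y))) \<or>
          gen_quaternion_group (subgroup_generated G (H \<union> (H #> y)))"
        using cyclic_or_gen_quaternion_if_no_involution[OF fin cyc pow k y False normal sq] by blast
      then show False
        using no_K subgroup_Un_rcos[OF y normal sq] card_Un_rcos[OF fin y False] by blast
    qed
  qed
qed

end

theorem lemma3p2:
  fixes G :: "('a, 'b) monoid_scheme" and H :: "'a set"
  assumes "group G" and "finite (carrier G)"
    and "subgroup H G"
    and "H \<noteq> {\<one>\<^bsub>G\<^esub>}"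
    and "cyclic_group (subgroup_generated G H)"
    and "\<exists>k::nat. card H = 2 ^ k"
  shows "subgroup_perfect_code G H \<longleftrightarrow>
    \<not> (\<exists>K. subgroup K G \<and> H \<subseteq> K \<and> card K = 2 * card H \<and>
          (cyclic_group (subgroup_generated G K) \<or>
           gen_quaternion_group (subgroup_generated G K)))"
proof -
  interpret group_subgroup G H
    using assms(1,3) by (simp add: group_subgroup_def group_subgroup_axioms_def)
  obtain k where pow: "card H = 2 ^ k"
    using assms(6) by blast
  have "k \<ge> 1"
  proof (rule ccontr)
    assume "\<not> k \<ge> 1"
    then have "card H = 1"
      using pow by simp
    then show False
      using assms(4) H.one_closed by (metis card_1_singletonE singletonD)
  qed
  have "subgroup_perfect_code G H \<longleftrightarrow> involution_in_normalizing_cosets G H"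
    using involution_in_normalizing_cosets_if_perfect_code subgroup_perfect_code_if_inv_closed_transversal
      inv_closed_transversal_if_involution_in_normalizing_cosets[OF assms(2) pow] by blast
  then show ?thesis
    using no_cyclic_or_gen_quaternion_overgroup[OF assms(2) pow \<open>k \<ge> 1\<close>]
      involution_in_normalizing_cosets_if_no_overgroup[OF assms(2,5) pow \<open>k \<ge> 1\<close>] by blast
qed

end
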